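(* Assume $\varphi'(t) > 0$ for all $t \in [-1,1]$ and that the graph defined by the weights $w_{ij} \geq 0$ is connected. Let $X \in \mathcal{M}$ be a critical point of $f$ at which the Riemannian Hessian is negative semidefinite. If there exists a nonzero $v \in \mathbb{R}^d$ with $X^\top v \geq 0$ entrywise (i.e., $x_1,\dots,x_n$ lie in a common closed hemisphere), then $X$ is a global maximum of $f$ (equivalently $x_1 = \cdots = x_n$). Such a vector $v$ exists whenever $\mathrm{rank}(X) < d$.
   Context: $d\geq 2$, $\mathcal{M} = (\mathbb{S}^{d-1})^n$ is the set of $X \in \mathbb{R}^{d\times n}$ with unit-norm columns $x_1,\dots,x_n$, a Riemannian submanifold of $\mathbb{R}^{d\times n}$ with the Frobenius metric. $\varphi:[-1,1]\to\mathbb{R}$ is twice continuously differentiable, $W$ is symmetric with $w_{ij}\ge0$, the graph has edge $\{i,j\}$ iff $w_{ij}>0$, and $f(X) = \frac12\sum_{i,j} w_{ij}\varphi(x_i^\top x_j)$. Gradient and Hessian are Riemannian. *)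

theory Defs
  imports "HOL-Analysis.Analysis"
begin

text \<open>Points X of R^(d x n) are matrices of type real^'n^'d (d rows, n columns);
  the i-th column x_i is column i X.  The ambient space carries the Frobenius
  inner product, which is the inner product of the type real^'n^'d.\<close>

definition sphere_prod :: "(real^'n^'d) set" where
  "sphere_prod = {X. \<forall>i. norm (column i X) = 1}"

definition tangent_space :: "real^'n^'d \<Rightarrow> (real^'n^'d) set" where
  "tangent_space X = {V. \<forall>i. column i X \<bullet> column i V = 0}"

text \<open>Orthogonal projection onto the tangent space at X:
  Proj_X(Z) = Z - X ddiag(X^T Z) (formula taken for arbitrary X in the ambient space,
  giving a smooth extension of the projector).\<close>
definition proj_tan :: "real^'n^'d \<Rightarrow> real^'n^'d \<Rightarrow> real^'n^'d" where
  "proj_tan X Z = (\<chi> k i. Z $ k $ i - (column i X \<bullet> column i Z) * X $ k $ i)"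

definition egrad :: "(real^'n^'d \<Rightarrow> real) \<Rightarrow> real^'n^'d \<Rightarrow> real^'n^'d" where
  "egrad g X = (THE G. (g has_derivative (\<lambda>H. G \<bullet> H)) (at X))"

definition rgrad :: "(real^'n^'d \<Rightarrow> real) \<Rightarrow> real^'n^'d \<Rightarrow> real^'n^'d" where
  "rgrad g X = proj_tan X (egrad g X)"

definition rhess :: "(real^'n^'d \<Rightarrow> real) \<Rightarrow> real^'n^'d \<Rightarrow> real^'n^'d \<Rightarrow> real^'n^'d" where
  "rhess g X V = proj_tan X (frechet_derivative (\<lambda>Y. proj_tan Y (egrad g Y)) (at X) V)"

definition objf :: "(real \<Rightarrow> real) \<Rightarrow> real^'n^'n \<Rightarrow> real^'n^'d \<Rightarrow> real" where
  "objf \<phi> W X = (1/2) * (\<Sum>i\<in>UNIV. \<Sum>j\<in>UNIV. W $ i $ j * \<phi> (column i X \<bullet> column j X))"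

definition weight_graph_connected :: "real^'n^'n \<Rightarrow> bool" where
  "weight_graph_connected W \<longleftrightarrow> (\<forall>i j. (\<lambda>a b. W $ a $ b > 0)\<^sup>*\<^sup>* i j)"

end

theory Submission
  imports Defs
begin

text \<open>Write \<open>a\<^sub>i\<^sub>j = w\<^sub>i\<^sub>j \<phi>'(x\<^sub>i\<^sup>T x\<^sub>j) \<ge> 0\<close>. Criticality says that each column is an eigenvector
  of the aggregated field, \<open>\<Sum>\<^sub>j a\<^sub>i\<^sub>j x\<^sub>j = \<lambda>\<^sub>i x\<^sub>i\<close> with \<open>\<lambda>\<^sub>i = \<Sum>\<^sub>j a\<^sub>i\<^sub>j x\<^sub>i\<^sup>T x\<^sub>j\<close>.
  For a hemisphere direction \<open>v\<close> the numbers \<open>s\<^sub>i = x\<^sub>i\<^sup>T v \<ge> 0\<close> then satisfy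
  \<open>\<Sum>\<^sub>j a\<^sub>i\<^sub>j s\<^sub>j = \<lambda>\<^sub>i s\<^sub>i\<close>.

  If some \<open>s\<^sub>i\<close> vanishes, nonnegativity spreads the zero along the edges, so \<open>v\<close> is orthogonal
  to every column. Then \<open>V = (v, \<dots>, v)\<close> is tangent and the Hessian quadratic form at \<open>V\<close> is
  \<open>\<parallel>v\<parallel>\<^sup>2 \<Sum>\<^sub>i\<^sub>j a\<^sub>i\<^sub>j (1 - x\<^sub>i\<^sup>T x\<^sub>j) \<ge> 0\<close>; negative semidefiniteness makes every term vanish,
  i.e. adjacent columns coincide.

  If all \<open>s\<^sub>i\<close> are positive, look at a row \<open>k\<close> where \<open>s\<close> is minimal: the eigen-equation
  gives \<open>\<Sum>\<^sub>j a\<^sub>k\<^sub>j \<le> \<lambda>\<^sub>k\<close>, i.e. \<open>\<Sum>\<^sub>j a\<^sub>k\<^sub>j (1 - x\<^sub>k\<^sup>T x\<^sub>j) \<le> 0\<close>, so the neighbours of \<open>k\<close>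
  coincide with \<open>x\<^sub>k\<close> and attain the minimum as well.

  In both cases connectedness makes all columns equal, and equal columns maximise \<open>f\<close>
  because \<open>\<phi>\<close> is increasing on \<open>[-1, 1]\<close>.\<close>

lemma inner_matrix_columns: "(A::real^'n^'d) \<bullet> B = (\<Sum>i\<in>UNIV. column i A \<bullet> column i B)"
  by (simp add: inner_vec_def column_def sum.swap[of _ "UNIV::'d set"])

lemma bounded_linear_column: "bounded_linear (\<lambda>Y::real^'n^'d. column i Y)"
proof -
  have "linear (\<lambda>Y::real^'n^'d. column i Y)"
    by (rule linearI) (auto simp: column_def vec_eq_iff)
  thus ?thesis by (simp add: linear_conv_bounded_linear)
qed

lemma column_proj_tan:
  "column i (proj_tan Y Z) = column i Z - (column i Y \<bullet> column i Z) *\<^sub>R column i Y"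
  by (simp add: proj_tan_def column_def vec_eq_iff)

lemma inner_proj_tan_tangent:
  assumes "V \<in> tangent_space X"
  shows "V \<bullet> proj_tan X Z = V \<bullet> Z"
  using assms
  by (simp add: inner_matrix_columns column_proj_tan tangent_space_def inner_diff_right inner_commute)

lemma transpose_mult_vec_nth: "(transpose X *v v) $ i = column i X \<bullet> v"
  by (simp add: matrix_vector_mult_def transpose_def column_def inner_vec_def mult.commute)

lemma abs_inner_unit_le_1:
  fixes x y :: "'a::real_inner"
  assumes "norm x = 1" "norm y = 1"
  shows "\<bar>x \<bullet> y\<bar> \<le> 1"
  using Cauchy_Schwarz_ineq2[of x y] assms by simp

lemma unit_inner_eq_1_imp_eq:
  fixes x y :: "'a::real_inner"
  assumes "norm x = 1" "norm y = 1" "x \<bullet> y = 1"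
  shows "x = y"
proof -
  have "x \<bullet> x = 1" "y \<bullet> y = 1"
    using assms(1,2) by (simp_all add: power2_norm_eq_inner[symmetric])
  hence "(x - y) \<bullet> (x - y) = 0"
    using assms(3) by (simp add: inner_diff_left inner_diff_right inner_commute)
  thus ?thesis by simp
qed

lemma transpose_eq_self_nth: "transpose W = W \<Longrightarrow> W $ j $ i = W $ i $ j"
  by (metis transpose_def vec_lambda_beta)

subsection \<open>The Euclidean gradient of the objective\<close>

text \<open>In matrix notation this is \<open>Y (W \<circ> \<psi>(Y\<^sup>T Y))\<close>, with \<open>\<circ>\<close> the entrywise product; for
  \<open>\<psi> = \<phi>'\<close> it is the Euclidean gradient of \<open>objf \<phi> W\<close>.\<close>
definition objf_egrad :: "(real \<Rightarrow> real) \<Rightarrow> real^'n^'n \<Rightarrow> real^'n^'d \<Rightarrow> real^'n^'d" where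
  "objf_egrad \<psi> W Y = (\<chi> k i. \<Sum>j\<in>UNIV. W$i$j * \<psi> (column i Y \<bullet> column j Y) * Y$k$j)"

lemma column_objf_egrad:
  "column i (objf_egrad \<psi> W Y) = (\<Sum>j\<in>UNIV. (W$i$j * \<psi> (column i Y \<bullet> column j Y)) *\<^sub>R column j Y)"
  by (simp add: objf_egrad_def column_def vec_eq_iff)

lemma egrad_eqI:
  assumes "(g has_derivative (\<lambda>H. G \<bullet> H)) (at X)"
  shows "egrad g X = G"
  unfolding egrad_def
proof (rule the_equality)
  fix G' assume "(g has_derivative (\<lambda>H. G' \<bullet> H)) (at X)"
  from has_derivative_unique[OF this assms] have "\<And>H. G' \<bullet> H = G \<bullet> H" by metis
  from this[of "G' - G"] have "(G' - G) \<bullet> (G' - G) = 0" by (simp only: inner_diff_left)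
  thus "G' = G" by simp
qed (rule assms)

lemma has_derivative_objf:
  assumes d1: "\<And>t. (\<phi> has_real_derivative \<phi>' t) (at t)" and Wsym: "transpose W = W"
  shows "(objf \<phi> W has_derivative (\<lambda>H. objf_egrad \<phi>' W Y \<bullet> H)) (at Y)"
proof -
  let ?a = "\<lambda>i j. W$i$j * \<phi>' (column i Y \<bullet> column j Y)"
  have column_deriv: "((\<lambda>Y. column i Y) has_derivative (\<lambda>H. column i H)) (at Y)" for i
    by (rule bounded_linear_imp_has_derivative[OF bounded_linear_column])
  have "((\<lambda>Z. \<phi> (column i Z \<bullet> column j Z)) has_derivative
        (\<lambda>H. \<phi>' (column i Y \<bullet> column j Y) * (column i Y \<bullet> column j H + column i H \<bullet> column j Y)))
        (at Y)" for i j
    using has_derivative_compose[OF has_derivative_inner[OF column_deriv column_deriv],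
        of \<phi> "\<lambda>h. \<phi>' (column i Y \<bullet> column j Y) * h"] d1
    by (simp add: has_field_derivative_def)
  hence deriv: "(objf \<phi> W has_derivative (\<lambda>H. (1/2) * (\<Sum>i\<in>UNIV. \<Sum>j\<in>UNIV. W$i$j *
      (\<phi>' (column i Y \<bullet> column j Y) * (column i Y \<bullet> column j H + column i H \<bullet> column j Y)))))
      (at Y)"
    unfolding objf_def[abs_def] by (intro derivative_eq_intros) auto
  have "(1/2) * (\<Sum>i\<in>UNIV. \<Sum>j\<in>UNIV. W$i$j *
      (\<phi>' (column i Y \<bullet> column j Y) * (column i Y \<bullet> column j H + column i H \<bullet> column j Y)))
      = objf_egrad \<phi>' W Y \<bullet> H" for H
  proof -
    have "(\<Sum>i\<in>UNIV. \<Sum>j\<in>UNIV. ?a i j * (column i Y \<bullet> column j H))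
        = (\<Sum>i\<in>UNIV. \<Sum>j\<in>UNIV. ?a i j * (column j Y \<bullet> column i H))"
      by (subst sum.swap) (simp add: transpose_eq_self_nth[OF Wsym] inner_commute)
    moreover have "(\<Sum>i\<in>UNIV. \<Sum>j\<in>UNIV. ?a i j * (column i H \<bullet> column j Y))
        = (\<Sum>i\<in>UNIV. \<Sum>j\<in>UNIV. ?a i j * (column j Y \<bullet> column i H))"
      by (simp add: inner_commute)
    moreover have "objf_egrad \<phi>' W Y \<bullet> H
        = (\<Sum>i\<in>UNIV. \<Sum>j\<in>UNIV. ?a i j * (column j Y \<bullet> column i H))"
      by (simp add: inner_matrix_columns column_objf_egrad inner_sum_left)
    moreover have "(1/2) * (\<Sum>i\<in>UNIV. \<Sum>j\<in>UNIV. W$i$j *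
        (\<phi>' (column i Y \<bullet> column j Y) * (column i Y \<bullet> column j H + column i H \<bullet> column j Y)))
        = (1/2) * ((\<Sum>i\<in>UNIV. \<Sum>j\<in>UNIV. ?a i j * (column i Y \<bullet> column j H))
                 + (\<Sum>i\<in>UNIV. \<Sum>j\<in>UNIV. ?a i j * (column i H \<bullet> column j Y)))"
      by (simp add: sum.distrib algebra_simps)
    ultimately show ?thesis by simp
  qed
  with deriv show ?thesis by simp
qed

lemma egrad_objf:
  assumes "\<And>t. (\<phi> has_real_derivative \<phi>' t) (at t)" and "transpose W = W"
  shows "egrad (objf \<phi> W) Y = objf_egrad \<phi>' W Y"
  by (rule egrad_eqI[OF has_derivative_objf[OF assms]])

lemma critical_point_eigen_equation:
  assumes "\<And>t. (\<phi> has_real_derivative \<phi>' t) (at t)" and "transpose W = W"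
    and "rgrad (objf \<phi> W) X = 0"
  shows "(\<Sum>j\<in>UNIV. (W$i$j * \<phi>' (column i X \<bullet> column j X)) *\<^sub>R column j X)
       = (\<Sum>j\<in>UNIV. W$i$j * \<phi>' (column i X \<bullet> column j X) * (column i X \<bullet> column j X)) *\<^sub>R column i X"
proof -
  have "column i (proj_tan X (objf_egrad \<phi>' W X)) = 0"
    using assms(3) by (simp add: rgrad_def egrad_objf[OF assms(1,2)] column_def vec_eq_iff)
  thus ?thesis by (simp add: column_proj_tan column_objf_egrad inner_sum_right)
qed

subsection \<open>The Hessian along a constant direction\<close>

lemma differentiable_proj_tan_objf_egrad:
  assumes "\<And>t. (\<psi> has_real_derivative \<psi>' t) (at t)"
  shows "(\<lambda>Y. proj_tan Y (objf_egrad \<psi> W Y)) differentiable (at (X::real^'n^'d))"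
proof -
  have \<psi>: "\<psi> differentiable (at t)" for t
    using assms unfolding differentiable_def has_field_derivative_def by blast
  have entry: "(\<lambda>Y::real^'n^'d. Y$k$i) differentiable (at X)" for k i
    by (rule bounded_linear_imp_differentiable,
        rule bounded_linear_compose[OF bounded_linear_vec_nth bounded_linear_vec_nth])
  have "(\<lambda>Y::real^'n^'d. column i Y \<bullet> column j Y) differentiable (at X)" for i j
    by (simp add: inner_vec_def column_def) (auto intro!: derivative_intros entry)
  hence "(\<lambda>Y. objf_egrad \<psi> W Y $ l $ i) differentiable (at X)" for l i
    unfolding objf_egrad_def
    by simp (auto intro!: derivative_intros differentiable_compose[OF \<psi>] entry)
  thus ?thesis
    apply (subst differentiable_componentwise_within)
    apply (clarsimp simp: Basis_vec_def inner_axis proj_tan_def)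
    apply (simp add: inner_vec_def column_def)
    by (auto intro!: derivative_intros entry)
qed

lemma has_real_derivative_inner_along_line:
  assumes "F differentiable (at X)"
  shows "((\<lambda>t. V \<bullet> F (X + t *\<^sub>R V)) has_real_derivative V \<bullet> frechet_derivative F (at X) V) (at 0)"
proof -
  let ?F' = "frechet_derivative F (at X)"
  have FD: "(F has_derivative ?F') (at (X + 0 *\<^sub>R V))"
    using frechet_derivative_works[THEN iffD1, OF assms] by simp
  have "((\<lambda>t::real. X + t *\<^sub>R V) has_derivative (\<lambda>s. s *\<^sub>R V)) (at 0)"
    by (intro derivative_eq_intros) auto
  from bounded_linear.has_derivative[OF bounded_linear_inner_right has_derivative_compose[OF this FD]]
  have "((\<lambda>t. V \<bullet> F (X + t *\<^sub>R V)) has_derivative (\<lambda>s. V \<bullet> ?F' (s *\<^sub>R V))) (at 0)" .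
  moreover have "linear ?F'" using FD has_derivative_linear by blast
  hence "(\<lambda>s. V \<bullet> ?F' (s *\<^sub>R V)) = (\<lambda>s. (V \<bullet> ?F' V) * s)"
    by (auto simp: linear_cmul mult.commute)
  ultimately show ?thesis by (simp add: has_field_derivative_def)
qed

lemma has_real_derivative_times_ident_at_0:
  assumes "k differentiable (at 0)"
  shows "((\<lambda>t. t * k t) has_real_derivative k 0) (at 0)"
proof -
  obtain K where "(k has_derivative K) (at 0)" using assms unfolding differentiable_def by blast
  from has_derivative_mult[OF has_derivative_ident this]
  have "((\<lambda>t. t * k t) has_derivative (\<lambda>h. h * k 0)) (at 0)" by simp
  moreover have "(\<lambda>h. h * k 0) = (*) (k 0)" by (auto simp: mult.commute)
  ultimately show ?thesis by (simp add: has_field_derivative_def)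
qed

lemma inner_proj_tan_const_columns:
  fixes Y Z :: "real^'n^'d"
  assumes "\<And>i. column i V = v"
  shows "V \<bullet> proj_tan Y Z = (\<Sum>i\<in>UNIV. v \<bullet> column i Z - (column i Y \<bullet> column i Z) * (column i Y \<bullet> v))"
  by (simp add: inner_matrix_columns column_proj_tan assms inner_diff_right inner_commute)

text \<open>Moving along the constant direction \<open>V\<close> changes all Gram entries by the same amount
  \<open>t\<^sup>2\<parallel>v\<parallel>\<^sup>2\<close>, which makes the restriction of \<open>V \<bullet> grad f\<close> to the line explicit.\<close>
lemma inner_const_direction_proj_tan_objf_egrad:
  fixes X :: "real^'n^'d" and v :: "real^'d"
  assumes orth: "\<And>i. column i X \<bullet> v = 0"
  defines "V \<equiv> (\<chi> k i. v $ k) :: real^'n^'d"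
  shows "V \<bullet> proj_tan (X + t *\<^sub>R V) (objf_egrad \<psi> W (X + t *\<^sub>R V))
       = t * ((v \<bullet> v) * (\<Sum>i\<in>UNIV. \<Sum>j\<in>UNIV. W$i$j * \<psi> (column i X \<bullet> column j X + t*t*(v \<bullet> v)) *
           (1 - (column i X \<bullet> column j X + t*t*(v \<bullet> v)))))"
proof -
  define c where "c = v \<bullet> v"
  let ?Y = "X + t *\<^sub>R V"
  let ?\<tau> = "\<lambda>i j. column i X \<bullet> column j X + t*t*c"
  have cV: "column i V = v" for i by (simp add: V_def column_def vec_eq_iff)
  have cY: "column i ?Y = column i X + t *\<^sub>R v" for i
    by (simp add: V_def column_def vec_eq_iff)
  have \<tau>: "column i ?Y \<bullet> column j ?Y = ?\<tau> i j" for i j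
    using orth[of i] orth[of j] by (simp add: cY c_def inner_add_left inner_add_right inner_commute)
  have yv: "column i ?Y \<bullet> v = t * c" for i
    using orth[of i] by (simp add: cY c_def inner_add_left)
  have "V \<bullet> proj_tan ?Y (objf_egrad \<psi> W ?Y)
      = (\<Sum>i\<in>UNIV. v \<bullet> column i (objf_egrad \<psi> W ?Y)
          - (column i ?Y \<bullet> column i (objf_egrad \<psi> W ?Y)) * (column i ?Y \<bullet> v))"
    by (rule inner_proj_tan_const_columns[OF cV])
  also have "\<dots> = (\<Sum>i\<in>UNIV. \<Sum>j\<in>UNIV. W$i$j * \<psi> (?\<tau> i j) * (t*c)
                                   - W$i$j * \<psi> (?\<tau> i j) * ?\<tau> i j * (t*c))"
    by (simp add: column_objf_egrad inner_sum_left inner_sum_right \<tau> yv inner_commute[of v]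
          sum_distrib_right sum_subtractf)
  also have "\<dots> = t * (c * (\<Sum>i\<in>UNIV. \<Sum>j\<in>UNIV. W$i$j * \<psi> (?\<tau> i j) * (1 - ?\<tau> i j)))"
    by (simp add: sum_distrib_left sum_subtractf[symmetric] algebra_simps)
  finally show ?thesis by (simp only: c_def)
qed

lemma rhess_objf_const_direction:
  fixes X :: "real^'n^'d" and v :: "real^'d"
  assumes d1: "\<And>t. (\<phi> has_real_derivative \<phi>' t) (at t)"
    and d2: "\<And>t. (\<phi>' has_real_derivative \<phi>'' t) (at t)"
    and Wsym: "transpose W = W"
    and orth: "\<And>i. column i X \<bullet> v = 0"
  defines "V \<equiv> (\<chi> k i. v $ k) :: real^'n^'d"
  shows "V \<in> tangent_space X"
    and "V \<bullet> rhess (objf \<phi> W) X V = (v \<bullet> v) *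
      (\<Sum>i\<in>UNIV. \<Sum>j\<in>UNIV. W$i$j * \<phi>' (column i X \<bullet> column j X) * (1 - column i X \<bullet> column j X))"
proof -
  have cV: "column i V = v" for i by (simp add: V_def column_def vec_eq_iff)
  show tan: "V \<in> tangent_space X" by (simp add: tangent_space_def cV orth)
  define F where "F = (\<lambda>Y::real^'n^'d. proj_tan Y (objf_egrad \<phi>' W Y))"
  define k where "k = (\<lambda>t. (v \<bullet> v) * (\<Sum>i\<in>UNIV. \<Sum>j\<in>UNIV.
      W$i$j * \<phi>' (column i X \<bullet> column j X + t*t*(v \<bullet> v)) *
      (1 - (column i X \<bullet> column j X + t*t*(v \<bullet> v)))))"
  have "F differentiable (at X)"
    unfolding F_def by (rule differentiable_proj_tan_objf_egrad[OF d2])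
  note line = has_real_derivative_inner_along_line[OF this, of V]
  have \<phi>': "\<phi>' differentiable (at t)" for t
    using d2 unfolding differentiable_def has_field_derivative_def by blast
  have "k differentiable (at 0)"
    unfolding k_def by (auto intro!: derivative_intros differentiable_compose[OF \<phi>'])
  from has_real_derivative_times_ident_at_0[OF this]
  have "((\<lambda>t. V \<bullet> F (X + t *\<^sub>R V)) has_real_derivative k 0) (at 0)"
    by (simp add: F_def k_def V_def inner_const_direction_proj_tan_objf_egrad[OF orth])
  from DERIV_unique[OF line this] have "V \<bullet> frechet_derivative F (at X) V = k 0" .
  moreover have "(\<lambda>Y. proj_tan Y (egrad (objf \<phi> W) Y)) = F"
    by (simp add: F_def egrad_objf[OF d1 Wsym])
  ultimately show "V \<bullet> rhess (objf \<phi> W) X V = (v \<bullet> v) *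
      (\<Sum>i\<in>UNIV. \<Sum>j\<in>UNIV. W$i$j * \<phi>' (column i X \<bullet> column j X) * (1 - column i X \<bullet> column j X))"
    by (simp add: rhess_def inner_proj_tan_tangent[OF tan] k_def)
qed

subsection \<open>Propagation along the weight graph\<close>

lemma weight_graph_connected_propagate:
  assumes "weight_graph_connected W"
    and "\<And>a b. W$a$b > 0 \<Longrightarrow> Q a \<Longrightarrow> Q b" and "Q i"
  shows "Q j"
proof -
  have "(\<lambda>a b. W $ a $ b > 0)\<^sup>*\<^sup>* i j" using assms(1) by (simp add: weight_graph_connected_def)
  thus ?thesis by (induction rule: rtranclp_induct) (auto intro: assms)
qed

lemma sum_nonneg_le_0_imp_eq_0:
  fixes f :: "'a \<Rightarrow> real"
  assumes "finite S" "\<And>x. x \<in> S \<Longrightarrow> f x \<ge> 0" "sum f S \<le> 0" "x \<in> S"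
  shows "f x = 0"
  using assms sum_nonneg[of S f] sum_nonneg_eq_0_iff[of S f] by force

text \<open>In the following lemmas \<open>x\<close> are the columns, \<open>A\<close> the weights \<open>a\<^sub>i\<^sub>j = w\<^sub>i\<^sub>j \<phi>'(x\<^sub>i\<^sup>T x\<^sub>j)\<close>
  and \<open>s\<^sub>i = x\<^sub>i\<^sup>T v\<close>.\<close>

lemma neighbour_eq_of_row_defect_nonpos:
  fixes x :: "'n::finite \<Rightarrow> 'a::real_inner"
  assumes unit: "\<And>i. norm (x i) = 1" and A: "\<And>i j. A i j \<ge> 0"
    and defect: "(\<Sum>l\<in>UNIV. A j l * (1 - x j \<bullet> x l)) \<le> 0" and "A j l > 0"
  shows "x l = x j"
proof -
  have "1 - x j \<bullet> x l' \<ge> 0" for l'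
    using abs_inner_unit_le_1[OF unit unit, of j l'] by simp
  hence "A j l * (1 - x j \<bullet> x l) = 0"
    by (intro sum_nonneg_le_0_imp_eq_0[OF _ _ defect]) (auto intro: mult_nonneg_nonneg A)
  hence "x j \<bullet> x l = 1" using \<open>A j l > 0\<close> by simp
  thus ?thesis using unit_inner_eq_1_imp_eq unit by metis
qed

lemma columns_eq_of_total_defect_nonpos:
  fixes x :: "'n::finite \<Rightarrow> 'a::real_inner"
  assumes unit: "\<And>i. norm (x i) = 1" and A: "\<And>i j. A i j \<ge> 0"
    and conn: "weight_graph_connected W" and edge: "\<And>i j. W$i$j > 0 \<Longrightarrow> A i j > 0"
    and defect: "(\<Sum>i\<in>UNIV. \<Sum>j\<in>UNIV. A i j * (1 - x i \<bullet> x j)) \<le> 0"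
  shows "x i = x j"
proof -
  have nonneg: "1 - x i \<bullet> x j \<ge> 0" for i j
    using abs_inner_unit_le_1[OF unit unit, of i j] by simp
  have row_nonneg: "(\<Sum>l\<in>UNIV. A i l * (1 - x i \<bullet> x l)) \<ge> 0" for i
    by (intro sum_nonneg mult_nonneg_nonneg A nonneg)
  have row: "(\<Sum>l\<in>UNIV. A i l * (1 - x i \<bullet> x l)) \<le> 0" for i
    using sum_nonneg_le_0_imp_eq_0[OF _ row_nonneg defect] by simp
  have "x q = x i" if "W$p$q > 0" "x p = x i" for p q
    using neighbour_eq_of_row_defect_nonpos[where x = x and A = A and j = p and l = q,
        OF unit A row edge[OF that(1)]] that(2)
    by simp
  from weight_graph_connected_propagate[where Q = "\<lambda>p. x p = x i", OF conn this refl]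
  have "x j = x i" .
  thus ?thesis by (rule sym)
qed

lemma hemisphere_zero_propagates:
  assumes A: "\<And>i j. A i j \<ge> 0" and s: "\<And>i. s i \<ge> 0"
    and conn: "weight_graph_connected W" and edge: "\<And>i j. W$i$j > 0 \<Longrightarrow> A i j > 0"
    and eigen: "\<And>i. (\<Sum>j\<in>UNIV. A i j * s j) = \<mu> i * s i"
    and "s k = 0"
  shows "s j = (0::real)"
proof (rule weight_graph_connected_propagate[where Q = "\<lambda>j. s j = 0", OF conn _ \<open>s k = 0\<close>])
  fix p q assume "W$p$q > 0" "s p = 0"
  hence "A p q * s q = 0"
    using sum_nonneg_le_0_imp_eq_0[of UNIV "\<lambda>j. A p j * s j" q] eigen[of p] A s by simp
  thus "s q = 0" using edge[OF \<open>W$p$q > 0\<close>] by simp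
qed

lemma columns_eq_of_positive_hemisphere:
  fixes x :: "'n::finite \<Rightarrow> 'a::real_inner"
  assumes unit: "\<And>i. norm (x i) = 1" and A: "\<And>i j. A i j \<ge> 0"
    and conn: "weight_graph_connected W" and edge: "\<And>i j. W$i$j > 0 \<Longrightarrow> A i j > 0"
    and pos: "\<And>i. x i \<bullet> v > 0"
    and eigen: "\<And>i. (\<Sum>j\<in>UNIV. A i j * (x j \<bullet> v)) = (\<Sum>j\<in>UNIV. A i j * (x i \<bullet> x j)) * (x i \<bullet> v)"
  shows "x i = x j"
proof -
  define m where "m = Min (range (\<lambda>i. x i \<bullet> v))"
  have "m \<in> range (\<lambda>i. x i \<bullet> v)" unfolding m_def by (rule Min_in) auto
  then obtain k where k: "x k \<bullet> v = m" by auto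
  have m_le: "m \<le> x j \<bullet> v" for j unfolding m_def by (rule Min_le) auto
  have step: "x q = x k" if edge_pq: "W$p$q > 0" and p: "x p = x k" for p q
  proof -
    have "(\<Sum>j\<in>UNIV. A p j * m) \<le> (\<Sum>j\<in>UNIV. A p j * (x j \<bullet> v))"
      by (intro sum_mono mult_left_mono m_le A)
    also have "\<dots> = (\<Sum>j\<in>UNIV. A p j * (x p \<bullet> x j)) * m" using eigen[of p] p k by simp
    finally have "(\<Sum>j\<in>UNIV. A p j) * m \<le> (\<Sum>j\<in>UNIV. A p j * (x p \<bullet> x j)) * m"
      by (simp add: sum_distrib_right)
    hence "(\<Sum>j\<in>UNIV. A p j) \<le> (\<Sum>j\<in>UNIV. A p j * (x p \<bullet> x j))"
      by (rule mult_right_le_imp_le) (use pos[of k] k in simp)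
    hence "(\<Sum>j\<in>UNIV. A p j * (1 - x p \<bullet> x j)) \<le> 0"
      by (simp add: right_diff_distrib sum_subtractf)
    from neighbour_eq_of_row_defect_nonpos[where x = x and A = A and j = p and l = q,
        OF unit A this edge[OF edge_pq]] p
    show "x q = x k" by simp
  qed
  have "x l = x k" for l
    by (rule weight_graph_connected_propagate[where Q = "\<lambda>p. x p = x k", OF conn step refl])
  from this[of i] this[of j] show ?thesis by simp
qed

subsection \<open>Global maximality\<close>

lemma critical_nsd_hemisphere_columns_eq:
  fixes X :: "real^'n^'d" and v :: "real^'d"
  assumes d1: "\<And>t. (\<phi> has_real_derivative \<phi>' t) (at t)"
    and d2: "\<And>t. (\<phi>' has_real_derivative \<phi>'' t) (at t)"
    and pos: "\<And>t. t \<in> {-1..1} \<Longrightarrow> \<phi>' t > 0"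
    and Wsym: "transpose W = W" and Wnn: "\<And>i j. W $ i $ j \<ge> 0"
    and conn: "weight_graph_connected W"
    and XM: "X \<in> sphere_prod"
    and crit: "rgrad (objf \<phi> W) X = 0"
    and nsd: "\<And>V. V \<in> tangent_space X \<Longrightarrow> V \<bullet> rhess (objf \<phi> W) X V \<le> 0"
    and "v \<noteq> 0" and hemi: "\<And>i. column i X \<bullet> v \<ge> 0"
  shows "column i X = column j X"
proof -
  define x where "x = (\<lambda>i. column i X)"
  define A where "A = (\<lambda>i j. W$i$j * \<phi>' (x i \<bullet> x j))"
  have unit: "norm (x i) = 1" for i using XM by (simp add: sphere_prod_def x_def)
  have \<phi>'_pos: "\<phi>' (x i \<bullet> x j) > 0" for i j
    using pos abs_inner_unit_le_1[OF unit unit, of i j] by (simp add: abs_le_iff)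
  have A: "A i j \<ge> 0" for i j using Wnn[of i j] \<phi>'_pos[of i j] by (simp add: A_def)
  have edge: "A i j > 0" if "W$i$j > 0" for i j using that \<phi>'_pos[of i j] by (simp add: A_def)
  have eigen: "(\<Sum>j\<in>UNIV. A i j * (x j \<bullet> v)) = (\<Sum>j\<in>UNIV. A i j * (x i \<bullet> x j)) * (x i \<bullet> v)"
    for i
    using arg_cong[OF critical_point_eigen_equation[OF d1 Wsym crit, of i], of "\<lambda>z. z \<bullet> v"]
    by (simp add: inner_sum_left A_def x_def)
  have "x i \<bullet> v > 0" if "\<forall>k. x k \<bullet> v \<noteq> 0" for i
    using hemi[of i] that by (simp add: x_def order_less_le)
  then consider (touching) k where "x k \<bullet> v = 0" | (inside) "\<And>i. x i \<bullet> v > 0"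
    by blast
  hence "x i = x j"
  proof cases
    case touching
    have hemi': "x l \<bullet> v \<ge> 0" for l using hemi by (simp add: x_def)
    have "x l \<bullet> v = 0" for l
      by (rule hemisphere_zero_propagates[where A = A and s = "\<lambda>l. x l \<bullet> v"])
         (fact A hemi' conn edge eigen touching)+
    hence orth: "column l X \<bullet> v = 0" for l by (simp add: x_def)
    note hess = rhess_objf_const_direction[OF d1 d2 Wsym orth]
    have "(v \<bullet> v) * (\<Sum>i\<in>UNIV. \<Sum>j\<in>UNIV. A i j * (1 - x i \<bullet> x j)) \<le> 0"
      using nsd[OF hess(1)] hess(2) by (simp add: A_def x_def)
    moreover have "v \<bullet> v > 0" using \<open>v \<noteq> 0\<close> by simp
    ultimately have defect: "(\<Sum>i\<in>UNIV. \<Sum>j\<in>UNIV. A i j * (1 - x i \<bullet> x j)) \<le> 0"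
      by (simp add: mult_le_0_iff)
    show ?thesis
      by (rule columns_eq_of_total_defect_nonpos[where x = x and A = A])
         (fact unit A conn edge defect)+
  next
    case inside
    show ?thesis
      by (rule columns_eq_of_positive_hemisphere[where x = x and A = A])
         (fact unit A conn edge inside eigen)+
  qed
  thus ?thesis by (simp add: x_def)
qed

lemma objf_le_at_equal_columns:
  assumes d1: "\<And>t. (\<phi> has_real_derivative \<phi>' t) (at t)"
    and pos: "\<And>t. t \<in> {-1..1} \<Longrightarrow> \<phi>' t > 0"
    and Wnn: "\<And>i j. W $ i $ j \<ge> 0"
    and XM: "X \<in> sphere_prod" and eq: "\<And>i j. column i X = column j X"
    and YM: "Y \<in> sphere_prod"
  shows "objf \<phi> W Y \<le> objf \<phi> W X"
proof -
  have mono: "\<phi> s \<le> \<phi> 1" if "-1 \<le> s" "s \<le> 1" for s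
    by (rule DERIV_nonneg_imp_nondecreasing[OF that(2)])
       (use d1 pos that in \<open>auto intro!: exI less_imp_le\<close>)
  have "column i X \<bullet> column j X = 1" for i j
    using XM eq[of j i] by (simp add: sphere_prod_def power2_norm_eq_inner[symmetric])
  moreover have "\<bar>column i Y \<bullet> column j Y\<bar> \<le> 1" for i j
    using YM by (intro abs_inner_unit_le_1) (simp_all add: sphere_prod_def)
  ultimately have "\<phi> (column i Y \<bullet> column j Y) \<le> \<phi> (column i X \<bullet> column j X)" for i j
    using mono by (simp add: abs_le_iff)
  thus ?thesis
    unfolding objf_def by (intro mult_left_mono sum_mono) (auto intro: mult_left_mono Wnn)
qed

lemma rank_lt_imp_transpose_kernel:
  fixes X :: "real^'n^'d"
  assumes "rank X < CARD('d)"
  obtains v where "v \<noteq> 0" "transpose X *v v = 0"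
proof -
  have "rank (transpose X) \<noteq> CARD('d)" using assms by (simp add: rank_transpose)
  thus ?thesis using matrix_nonfull_linear_equations_eq[of "transpose X"] that by blast
qed

theorem mainTheorem11:
  fixes \<phi> \<phi>' \<phi>'' :: "real \<Rightarrow> real"
    and W :: "real^'n^'n"
    and X :: "real^'n^'d"
  assumes d2: "CARD('d) \<ge> 2"
    and d1: "\<And>t. (\<phi> has_real_derivative \<phi>' t) (at t)"
    and d2': "\<And>t. (\<phi>' has_real_derivative \<phi>'' t) (at t)"
    and c2: "continuous_on UNIV \<phi>''"
    and pos: "\<And>t. t \<in> {-1..1} \<Longrightarrow> \<phi>' t > 0"
    and Wsym: "transpose W = W"
    and Wnn: "\<And>i j. W $ i $ j \<ge> 0"
    and conn: "weight_graph_connected W"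
    and XM: "X \<in> sphere_prod"
    and crit: "rgrad (objf \<phi> W) X = 0"
    and nsd: "\<And>V. V \<in> tangent_space X \<Longrightarrow> V \<bullet> rhess (objf \<phi> W) X V \<le> 0"
  shows "(\<forall>v::real^'d. v \<noteq> 0 \<and> (\<forall>i. (transpose X *v v) $ i \<ge> 0) \<longrightarrow>
            (\<forall>Y::real^'n^'d\<in>sphere_prod. objf \<phi> W Y \<le> objf \<phi> W X) \<and>
            (\<forall>i j. column i X = column j X))
       \<and> (rank X < CARD('d) \<longrightarrow>
            (\<exists>v::real^'d. v \<noteq> 0 \<and> (\<forall>i. (transpose X *v v) $ i \<ge> 0)))"
proof (intro conjI allI impI ballI)
  assume "rank X < CARD('d)"
  then obtain v where "v \<noteq> 0" "transpose X *v v = 0" by (rule rank_lt_imp_transpose_kernel)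
  thus "\<exists>v::real^'d. v \<noteq> 0 \<and> (\<forall>i. (transpose X *v v) $ i \<ge> 0)" by auto
next
  fix v :: "real^'d"
  assume "v \<noteq> 0 \<and> (\<forall>i. (transpose X *v v) $ i \<ge> 0)"
  hence "v \<noteq> 0" and "\<And>i. column i X \<bullet> v \<ge> 0" using transpose_mult_vec_nth[of X v] by auto
  note eq = critical_nsd_hemisphere_columns_eq[OF d1 d2' pos Wsym Wnn conn XM crit nsd this]
  show "column i X = column j X" for i j by (rule eq)
  show "objf \<phi> W Y \<le> objf \<phi> W X" if "Y \<in> sphere_prod" for Y
    by (rule objf_le_at_equal_columns[OF d1 pos Wnn XM eq that])
qed

end
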